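(* Let $K\ge 2$ and $L\ge 2$ be integers and let $s_1,\dots,s_K\in[0,1]$ be offers that are not all zero. Consider the symmetric $L$-player responder game in which each responder's strategy is a probability vector $p=(p_1,\dots,p_K)$ (with $p_i\ge 0$, $\sum_i p_i=1$), $p_i$ being the probability of choosing proposer $i$; a responder who chooses proposer $i$ receives $s_i$ with probability $1/N_i$ and $0$ otherwise, where $N_i$ is the total number of responders who chose proposer $i$ (all choices being made independently). Then this game possesses a unique evolutionarily stable strategy.
   Context: This is the responder stage of the Multi-Proposer-Multi-Responder Ultimatum Game with $K$ proposers and $L$ responders: each proposer $i$ offers a share $s_i$ of a reward of size one; each responder independently selects one proposer according to its mixed strategy; a proposer selected by at least one responder receives $1-s_i$, otherwise $0$; among the responders who selected proposer $i$, exactly one chosen uniformly at random receives $s_i$, the rest receive $0$. Responders are drawn from an infinite population. For a symmetric $L$-player game, write $E(q;\,r)$ for the expected payoff of a focal player using strategy $q$ when each of the other $L-1$ players independently uses strategy $r$ (equivalently, is drawn from a population whose average strategy is $r$). A strategy $p$ is evolutionarily stable if for every strategy $q\neq p$ there is $\bar\varepsilon>0$ such that for all $\varepsilon\in(0,\bar\varepsilon)$, $E(p;\,(1-\varepsilon)p+\varepsilon q)>E(q;\,(1-\varepsilon)p+\varepsilon q)$. *)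

theory Defs
  imports Complex_Main
begin

definition strategies :: "nat \<Rightarrow> (nat \<Rightarrow> real) set" where
  "strategies K = {p. (\<forall>i<K. 0 \<le> p i) \<and> (\<forall>i\<ge>K. p i = 0) \<and> (\<Sum>i<K. p i) = 1}"

text \<open>Probability that the other L-1 responders (each independently choosing
  proposer i with probability x) produce exactly k choosers of proposer i,
  times 1/(k+1): the expected share 1/N_i of the focal responder.\<close>
definition share_factor :: "nat \<Rightarrow> real \<Rightarrow> real" where
  "share_factor L x =
     (\<Sum>k\<le>L - 1. real ((L - 1) choose k) * x ^ k * (1 - x) ^ (L - 1 - k) / real (k + 1))"

text \<open>E(q; r): expected payoff of a focal responder using q when each of the
  other L-1 responders independently uses r.\<close>
definition resp_payoff :: "nat \<Rightarrow> nat \<Rightarrow> (nat \<Rightarrow> real) \<Rightarrow> (nat \<Rightarrow> real) \<Rightarrow> (nat \<Rightarrow> real) \<Rightarrow> real" where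
  "resp_payoff K L s q r = (\<Sum>i<K. q i * s i * share_factor L (r i))"

definition is_ESS :: "nat \<Rightarrow> nat \<Rightarrow> (nat \<Rightarrow> real) \<Rightarrow> (nat \<Rightarrow> real) \<Rightarrow> bool" where
  "is_ESS K L s p \<longleftrightarrow> p \<in> strategies K \<and>
     (\<forall>q\<in>strategies K. q \<noteq> p \<longrightarrow>
        (\<exists>eb>0. \<forall>e. 0 < e \<and> e < eb \<longrightarrow>
           resp_payoff K L s p (\<lambda>i. (1 - e) * p i + e * q i) >
           resp_payoff K L s q (\<lambda>i. (1 - e) * p i + e * q i)))"

end

theory Submission
  imports Defs
begin

text \<open>
  Against opponents playing r, a responder choosing proposer i earns \<open>\<phi>\<^sub>i(r\<^sub>i)\<close>
  with \<open>\<phi>\<^sub>i(x) = s\<^sub>i \<cdot> share_factor L x\<close>, and \<open>share_factor L x = (1 - (1 - x)\<^sup>L) / (L x)\<close>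
  decreases strictly from 1 to 1/L on [0,1]. By the intermediate value theorem, applied to
  the total probability \<open>\<Sum>\<^sub>i \<phi>\<^sub>i\<^sup>-\<^sup>1(c)\<close> as a function of the level c, there is a
  strategy p and a level c > 0 with \<open>\<phi>\<^sub>i(p\<^sub>i) \<ge> c\<close> wherever \<open>p\<^sub>i > 0\<close> and
  \<open>\<phi>\<^sub>i(p\<^sub>i) \<le> c\<close> wherever \<open>p\<^sub>i < 1\<close>. Since
  \<open>E(p; r) - E(q; r) = \<Sum>\<^sub>i (p\<^sub>i - q\<^sub>i) (\<phi>\<^sub>i(r\<^sub>i) - c)\<close>, monotonicity of the \<open>\<phi>\<^sub>i\<close> makes this
  positive at every mixture \<open>r = (1 - e) p + e q\<close> with 0 < e < 1. So p is an ESS with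
  invasion barrier 1, and any other ESS p' would have to beat p on mixtures that are also
  mixtures of p with p', where p beats p'.
\<close>

lemma share_factor_times:
  fixes x :: real
  shows "real (Suc n) * x * share_factor (Suc n) x = 1 - (1 - x) ^ Suc n"
proof -
  \<comment> \<open>The binomial expansion of \<open>(x + (1 - x)) ^ Suc n\<close> without its term for \<open>k = 0\<close>.\<close>
  have "real (Suc n) * x * share_factor (Suc n) x =
      (\<Sum>k\<le>n. real (Suc n choose Suc k) * x ^ Suc k * (1 - x) ^ (Suc n - Suc k))"
    unfolding share_factor_def sum_distrib_left diff_Suc_1
  proof (rule sum.cong[OF refl])
    fix k
    have "real (Suc n choose Suc k) = real (Suc n) * real (n choose k) / real (Suc k)"
      using Suc_times_binomial[of k n] by (simp add: field_simps flip: of_nat_mult)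
    then show "real (Suc n) * x * (real (n choose k) * x ^ k * (1 - x) ^ (n - k) / real (k + 1)) =
        real (Suc n choose Suc k) * x ^ Suc k * (1 - x) ^ (Suc n - Suc k)"
      by simp
  qed
  also have "\<dots> = (x + (1 - x)) ^ Suc n - (1 - x) ^ Suc n"
    unfolding binomial_ring by (subst sum.atMost_Suc_shift) simp
  finally show ?thesis by simp
qed

lemma share_factor_eq:
  fixes x :: real
  assumes "L \<ge> 1"
  shows "share_factor L x = (\<Sum>j<L. (1 - x) ^ j) / real L"
proof -
  obtain n where L: "L = Suc n" using assms by (cases L) auto
  show ?thesis
  proof (cases "x = 0")
    case True
    then show ?thesis by (simp add: share_factor_def L sum.atMost_shift)
  next
    case False
    have "x * (real L * share_factor L x) = x * (\<Sum>j<L. (1 - x) ^ j)"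
      using share_factor_times[of n x] one_diff_power_eq[of "1 - x" L] by (simp add: L ac_simps)
    then show ?thesis using False assms by (simp add: field_simps)
  qed
qed

lemma share_factor_0: "L \<ge> 1 \<Longrightarrow> share_factor L 0 = 1"
  by (simp add: share_factor_eq)

lemma share_factor_1: "L \<ge> 1 \<Longrightarrow> share_factor L 1 = 1 / real L"
  by (cases L) (simp_all add: share_factor_eq sum.lessThan_Suc_shift del: sum.lessThan_Suc)

lemma continuous_on_share_factor:
  assumes "L \<ge> 1"
  shows "continuous_on A (share_factor L)"
proof -
  have "continuous_on A (\<lambda>x. (\<Sum>j<L. (1 - x) ^ j) / real L)"
    using assms by (intro continuous_intros) auto
  then show ?thesis by (simp add: share_factor_eq[OF assms])
qed

lemma strict_antimono_share_factor:
  assumes "L \<ge> 2"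
  shows "strict_antimono_on {0..1} (share_factor L)"
proof (rule monotone_onI)
  fix x y :: real
  assume "x \<in> {0..1}" "y \<in> {0..1}" "x < y"
  have "(\<Sum>j<L. (1 - y) ^ j) < (\<Sum>j<L. (1 - x) ^ j)"
  proof (rule sum_strict_mono_ex1)
    show "\<forall>j\<in>{..<L}. (1 - y) ^ j \<le> (1 - x) ^ j"
      using \<open>x < y\<close> \<open>y \<in> {0..1}\<close> by (auto intro!: power_mono)
    show "\<exists>j\<in>{..<L}. (1 - y) ^ j < (1 - x) ^ j"
      using assms \<open>x < y\<close> by (intro bexI[of _ 1]) auto
  qed simp
  then show "share_factor L y < share_factor L x"
    using assms by (simp add: share_factor_eq divide_strict_right_mono)
qed

text \<open>
  For decreasing \<open>\<phi>\<close>: the point of \<open>{a..b}\<close> where \<open>\<phi>\<close> attains the level c, or the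
  endpoint where \<open>\<phi>\<close> comes closest to c when c lies outside \<open>\<phi> ` {a..b}\<close>.
\<close>
definition crossing :: "real \<Rightarrow> real \<Rightarrow> (real \<Rightarrow> real) \<Rightarrow> real \<Rightarrow> real" where
  "crossing a b \<phi> c = the_inv_into {a..b} \<phi> (max (\<phi> b) (min (\<phi> a) c))"

context
  fixes a b :: real and \<phi> :: "real \<Rightarrow> real"
  assumes le: "a \<le> b"
    and cont: "continuous_on {a..b} \<phi>"
    and dec: "strict_antimono_on {a..b} \<phi>"
begin

private lemma inj_on_domain: "inj_on \<phi> {a..b}"
  using dec strict_antimono_iff_antimono by blast

private lemma clamp_in_image: "max (\<phi> b) (min (\<phi> a) c) \<in> \<phi> ` {a..b}"
proof -
  have "\<phi> b \<le> \<phi> a"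
    using le monotone_onD[OF dec, of a b] by (cases "a = b") auto
  then obtain x where "a \<le> x" "x \<le> b" "\<phi> x = max (\<phi> b) (min (\<phi> a) c)"
    using IVT2'[OF _ _ le cont, of "max (\<phi> b) (min (\<phi> a) c)"] by auto
  then show ?thesis by force
qed

lemma crossing_mem: "crossing a b \<phi> c \<in> {a..b}"
  unfolding crossing_def
  by (rule the_inv_into_into[OF inj_on_domain clamp_in_image order_refl])

lemma crossing_eq_clamp: "\<phi> (crossing a b \<phi> c) = max (\<phi> b) (min (\<phi> a) c)"
  unfolding crossing_def by (rule f_the_inv_into_f[OF inj_on_domain clamp_in_image])

lemma continuous_on_crossing: "continuous_on UNIV (crossing a b \<phi>)"
  unfolding crossing_def
proof (rule continuous_on_compose2[OF continuous_on_inv_into[OF cont _ inj_on_domain]])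
  show "continuous_on UNIV (\<lambda>c. max (\<phi> b) (min (\<phi> a) c))"
    by (intro continuous_intros)
qed (use clamp_in_image in auto)

lemma level_le_crossing:
  assumes "a < crossing a b \<phi> c"
  shows "c \<le> \<phi> (crossing a b \<phi> c)"
proof -
  have "\<phi> (crossing a b \<phi> c) < \<phi> a"
    using monotone_onD[OF dec _ crossing_mem assms] le by auto
  then show ?thesis unfolding crossing_eq_clamp by linarith
qed

lemma crossing_le_level:
  assumes "crossing a b \<phi> c < b"
  shows "\<phi> (crossing a b \<phi> c) \<le> c"
proof -
  have "\<phi> b < \<phi> (crossing a b \<phi> c)"
    using monotone_onD[OF dec crossing_mem _ assms] le by auto
  then show ?thesis unfolding crossing_eq_clamp by linarith
qed

lemma crossing_eq_left:
  assumes "\<phi> a \<le> c"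
  shows "crossing a b \<phi> c = a"
proof (rule ccontr)
  assume "crossing a b \<phi> c \<noteq> a"
  then have "a < crossing a b \<phi> c"
    using crossing_mem by (simp add: order.strict_iff_order)
  then have "c \<le> \<phi> (crossing a b \<phi> c)" "\<phi> (crossing a b \<phi> c) < \<phi> a"
    using level_le_crossing monotone_onD[OF dec _ crossing_mem] le by auto
  with assms show False by linarith
qed

lemma crossing_eq_right:
  assumes "c \<le> \<phi> b"
  shows "crossing a b \<phi> c = b"
proof (rule ccontr)
  assume "crossing a b \<phi> c \<noteq> b"
  then have "crossing a b \<phi> c < b"
    using crossing_mem by (simp add: order.strict_iff_order)
  then have "\<phi> (crossing a b \<phi> c) \<le> c" "\<phi> b < \<phi> (crossing a b \<phi> c)"
    using crossing_le_level monotone_onD[OF dec crossing_mem] le by auto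
  with assms show False by linarith
qed

end

lemma strategies_mem:
  assumes "p \<in> strategies K" "i < K"
  shows "p i \<in> {0..1}"
proof -
  have "p i \<le> (\<Sum>j<K. p j)"
    using assms by (intro member_le_sum) (auto simp: strategies_def)
  then show ?thesis using assms by (simp add: strategies_def)
qed

lemma strategies_neq:
  assumes "p \<in> strategies K" "q \<in> strategies K" "p \<noteq> q"
  obtains i where "i < K" "p i \<noteq> q i"
proof -
  obtain i where "p i \<noteq> q i" using assms(3) by (meson ext)
  moreover have "i < K"
  proof (rule ccontr)
    assume "\<not> i < K"
    then show False using \<open>p i \<noteq> q i\<close> assms(1,2) by (simp add: strategies_def)
  qed
  ultimately show ?thesis using that by blast
qed

lemma resp_payoff_diff:
  assumes "p \<in> strategies K" "q \<in> strategies K"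
  shows "resp_payoff K L s p r - resp_payoff K L s q r =
    (\<Sum>i<K. (p i - q i) * (s i * share_factor L (r i) - c))"
proof -
  have "(\<Sum>i<K. (p i - q i) * (s i * share_factor L (r i) - c)) =
      resp_payoff K L s p r - resp_payoff K L s q r - c * ((\<Sum>i<K. p i) - (\<Sum>i<K. q i))"
    unfolding resp_payoff_def sum_subtractf[symmetric] sum_distrib_left
    by (rule sum.cong) (simp_all add: algebra_simps)
  then show ?thesis using assms by (simp add: strategies_def)
qed

lemma mixture_mem:
  fixes x y e :: real
  assumes "x \<in> {0..1}" "y \<in> {0..1}" "e \<in> {0..1}"
  shows "(1 - e) * x + e * y \<in> {0..1}"
  using assms convex_bound_le[of x 1 y "1 - e" e] by simp

lemma mixture_gain_pos:
  fixes x y e c \<sigma> :: real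
  assumes "L \<ge> 2" "0 \<le> \<sigma>" "x \<in> {0..1}" "y \<in> {0..1}" "x \<noteq> y" "e \<in> {0<..<1}" "0 < c"
    and used: "0 < x \<Longrightarrow> c \<le> \<sigma> * share_factor L x"
    and unsaturated: "x < 1 \<Longrightarrow> \<sigma> * share_factor L x \<le> c"
  shows "0 < (x - y) * (\<sigma> * share_factor L ((1 - e) * x + e * y) - c)"
proof -
  define r where "r = (1 - e) * x + e * y"
  have r: "r \<in> {0..1}" "r - x = e * (y - x)"
    using mixture_mem[of x y e] assms(3,4,6) by (simp_all add: r_def algebra_simps)
  have dec: "share_factor L v < share_factor L u" if "u \<in> {0..1}" "v \<in> {0..1}" "u < v" for u v
    using monotone_onD[OF strict_antimono_share_factor[OF \<open>L \<ge> 2\<close>]] that by blast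
  show ?thesis
    unfolding r_def[symmetric]
  proof (cases "y < x")
    case True
    have "e * (y - x) < 0" using True assms(6) by (intro mult_pos_neg) auto
    then have "r < x" using r(2) by simp
    have "c \<le> \<sigma> * share_factor L x" using used True assms(4) by simp
    then have "0 < \<sigma>" using assms(2) \<open>0 < c\<close> by (cases "\<sigma> = 0") auto
    then have "\<sigma> * share_factor L x < \<sigma> * share_factor L r"
      using dec[OF r(1) assms(3) \<open>r < x\<close>] by simp
    then show "0 < (x - y) * (\<sigma> * share_factor L r - c)"
      using True \<open>c \<le> \<sigma> * share_factor L x\<close> by (intro mult_pos_pos) auto
  next
    case False
    then have "x < y" using assms(5) by simp
    have "0 < e * (y - x)" using \<open>x < y\<close> assms(6) by simp
    then have "x < r" using r(2) by simp
    have "\<sigma> * share_factor L x \<le> c" using unsaturated \<open>x < y\<close> assms(4) by simp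
    have "\<sigma> * share_factor L r < c"
    proof (cases "\<sigma> = 0")
      case False
      then have "\<sigma> * share_factor L r < \<sigma> * share_factor L x"
        using dec[OF assms(3) r(1) \<open>x < r\<close>] assms(2) by simp
      then show ?thesis using \<open>\<sigma> * share_factor L x \<le> c\<close> by linarith
    qed (simp add: \<open>0 < c\<close>)
    then show "0 < (x - y) * (\<sigma> * share_factor L r - c)"
      using \<open>x < y\<close> by (intro mult_neg_neg) auto
  qed
qed

definition payoff_level :: "nat \<Rightarrow> nat \<Rightarrow> (nat \<Rightarrow> real) \<Rightarrow> (nat \<Rightarrow> real) \<Rightarrow> real \<Rightarrow> bool" where
  "payoff_level K L s p c \<longleftrightarrow> p \<in> strategies K \<and> 0 < c \<and>
     (\<forall>i<K. 0 < p i \<longrightarrow> c \<le> s i * share_factor L (p i)) \<and>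
     (\<forall>i<K. p i < 1 \<longrightarrow> s i * share_factor L (p i) \<le> c)"

lemma payoff_level_beats_mixtures:
  assumes "L \<ge> 2" "\<forall>i<K. 0 \<le> s i" "payoff_level K L s p c"
    and q: "q \<in> strategies K" "q \<noteq> p" and e: "e \<in> {0<..<1}"
  shows "resp_payoff K L s q (\<lambda>i. (1 - e) * p i + e * q i)
       < resp_payoff K L s p (\<lambda>i. (1 - e) * p i + e * q i)"
proof -
  define gain where "gain i = (p i - q i) * (s i * share_factor L ((1 - e) * p i + e * q i) - c)" for i
  have p: "p \<in> strategies K" using assms(3) by (simp add: payoff_level_def)
  have gain_pos: "0 < gain i" if "i < K" "p i \<noteq> q i" for i
    unfolding gain_def
    using assms e that strategies_mem[OF p] strategies_mem[OF q(1)]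
    by (intro mixture_gain_pos) (auto simp: payoff_level_def)
  obtain j where "j < K" "q j \<noteq> p j" using strategies_neq[OF q(1) p q(2)] .
  have "0 < (\<Sum>i<K. gain i)"
  proof (rule sum_pos2)
    show "\<And>i. i \<in> {..<K} \<Longrightarrow> 0 \<le> gain i"
      using gain_pos by (fastforce simp: gain_def less_imp_le)
  qed (use gain_pos \<open>j < K\<close> \<open>q j \<noteq> p j\<close> in auto)
  then show ?thesis
    using resp_payoff_diff[OF p q(1)] by (simp add: gain_def)
qed

lemma unique_ESS_if_beats_mixtures:
  assumes p: "p \<in> strategies K"
    and beats: "\<And>q e. q \<in> strategies K \<Longrightarrow> q \<noteq> p \<Longrightarrow> e \<in> {0<..<1} \<Longrightarrow>
      resp_payoff K L s q (\<lambda>i. (1 - e) * p i + e * q i)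
        < resp_payoff K L s p (\<lambda>i. (1 - e) * p i + e * q i)"
  shows "\<exists>!p. is_ESS K L s p"
proof
  show "is_ESS K L s p"
    unfolding is_ESS_def using p beats by (intro conjI ballI impI exI[of _ 1]) auto
next
  fix p' assume "is_ESS K L s p'"
  show "p' = p"
  proof (rule ccontr)
    assume "p' \<noteq> p"
    have "\<exists>eb>0. \<forall>e. 0 < e \<and> e < eb \<longrightarrow>
        resp_payoff K L s p (\<lambda>i. (1 - e) * p' i + e * p i)
          < resp_payoff K L s p' (\<lambda>i. (1 - e) * p' i + e * p i)"
      using \<open>is_ESS K L s p'\<close> p \<open>p' \<noteq> p\<close>[symmetric] unfolding is_ESS_def by blast
    then obtain eb where "eb > 0" and ess: "\<And>e. 0 < e \<Longrightarrow> e < eb \<Longrightarrow>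
        resp_payoff K L s p (\<lambda>i. (1 - e) * p' i + e * p i)
          < resp_payoff K L s p' (\<lambda>i. (1 - e) * p' i + e * p i)"
      by blast
    define e where "e = min (eb / 2) (1 / 2)"
    have "e \<in> {0<..<1}" "e < eb" using \<open>eb > 0\<close> by (auto simp: e_def)
    have "p' \<in> strategies K" using \<open>is_ESS K L s p'\<close> by (simp add: is_ESS_def)
    have mix: "(\<lambda>i. (1 - (1 - e)) * p i + (1 - e) * p' i) = (\<lambda>i. (1 - e) * p' i + e * p i)"
      by (simp add: algebra_simps)
    show False
      using ess[of e] beats[OF \<open>p' \<in> strategies K\<close> \<open>p' \<noteq> p\<close>, of "1 - e"]
        \<open>e \<in> {0<..<1}\<close> \<open>e < eb\<close> unfolding mix by auto
  qed
qed

lemma payoff_level_exists: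
  assumes "L \<ge> 2" and s: "\<forall>i<K. 0 \<le> s i \<and> s i \<le> 1" and "\<exists>i<K. s i \<noteq> 0"
  shows "\<exists>p c. payoff_level K L s p c"
proof -
  define \<phi> where "\<phi> i x = s i * share_factor L x" for i x
  have \<phi>_cont: "continuous_on {0..1} (\<phi> i)" for i
    unfolding \<phi>_def using \<open>L \<ge> 2\<close>
    by (intro continuous_on_mult_left continuous_on_share_factor) simp
  have \<phi>_dec: "strict_antimono_on {0..1} (\<phi> i)" if "0 < s i" for i
    unfolding \<phi>_def using that monotone_onD[OF strict_antimono_share_factor[OF \<open>L \<ge> 2\<close>]]
    by (intro monotone_onI) simp
  note \<phi> = zero_le_one \<phi>_cont \<phi>_dec
  have \<phi>_0: "\<phi> i 0 = s i" and \<phi>_1: "\<phi> i 1 = s i / L" for i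
    using \<open>L \<ge> 2\<close> by (simp_all add: \<phi>_def share_factor_0 share_factor_1)
  define \<psi> where "\<psi> c i = (if i < K \<and> 0 < s i then crossing 0 1 (\<phi> i) c else 0)" for c i
  have \<psi>_mem: "\<psi> c i \<in> {0..1}" for c i
    using crossing_mem[OF \<phi>] by (simp add: \<psi>_def)
  have \<psi>_0: "\<psi> c i = 0" if "s i \<le> c" for c i
    using crossing_eq_left[OF \<phi>] that by (simp add: \<psi>_def \<phi>_0)
  have \<psi>_1: "\<psi> c i = 1" if "i < K" "0 < s i" "c \<le> s i / L" for c i
    using crossing_eq_right[OF \<phi>] that by (simp add: \<psi>_def \<phi>_1)
  have \<psi>_cont: "continuous_on A (\<lambda>c. \<psi> c i)" for A i
  proof (cases "i < K \<and> 0 < s i")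
    case True
    then show ?thesis
      using continuous_on_subset[OF continuous_on_crossing[OF \<phi>] subset_UNIV] by (simp add: \<psi>_def)
  qed (simp add: \<psi>_def del: de_Morgan_conj)
  obtain i0 where "i0 < K" "0 < s i0" using assms by (auto simp: order.strict_iff_order)
  define c0 where "c0 = s i0 / L"
  have "0 < c0" "c0 \<le> 1"
    using \<open>0 < s i0\<close> \<open>i0 < K\<close> s \<open>L \<ge> 2\<close> by (auto simp: c0_def divide_le_eq)
  have "(\<Sum>i<K. \<psi> 1 i) = 0" using s \<psi>_0 by simp
  moreover have "1 \<le> (\<Sum>i<K. \<psi> c0 i)"
    using member_le_sum[of i0 "{..<K}" "\<psi> c0"] \<psi>_1[of i0 c0] \<psi>_mem \<open>i0 < K\<close> \<open>0 < s i0\<close>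
    by (simp add: c0_def)
  moreover have "continuous_on {c0..1} (\<lambda>c. \<Sum>i<K. \<psi> c i)"
    by (intro continuous_on_sum \<psi>_cont)
  ultimately obtain c where c: "c0 \<le> c" "c \<le> 1" "(\<Sum>i<K. \<psi> c i) = 1"
    using IVT2'[of "\<lambda>c. \<Sum>i<K. \<psi> c i" 1 1 c0] \<open>c0 \<le> 1\<close> by auto
  have "\<psi> c \<in> strategies K"
  proof -
    have "0 \<le> \<psi> c i" for i using \<psi>_mem by simp
    moreover have "\<psi> c i = 0" if "K \<le> i" for i using that by (simp add: \<psi>_def)
    ultimately show ?thesis using c(3) by (simp add: strategies_def)
  qed
  have "payoff_level K L s (\<psi> c) c"
    unfolding payoff_level_def
  proof (intro conjI allI impI)
    show "0 < c" using \<open>0 < c0\<close> c by simp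
    fix i assume "i < K"
    show "0 < \<psi> c i \<Longrightarrow> c \<le> s i * share_factor L (\<psi> c i)"
      using level_le_crossing[OF \<phi>] \<open>i < K\<close> by (auto simp: \<psi>_def \<phi>_def split: if_splits)
    show "\<psi> c i < 1 \<Longrightarrow> s i * share_factor L (\<psi> c i) \<le> c"
      using crossing_le_level[OF \<phi>] \<open>i < K\<close> s \<open>0 < c\<close>
      by (auto simp: \<psi>_def \<phi>_def split: if_splits)
  qed fact
  then show ?thesis by blast
qed

theorem theorem2:
  fixes K L :: nat and s :: "nat \<Rightarrow> real"
  assumes "K \<ge> 2" and "L \<ge> 2"
    and "\<forall>i<K. 0 \<le> s i \<and> s i \<le> 1"
    and "\<exists>i<K. s i \<noteq> 0"
  shows "\<exists>!p. is_ESS K L s p"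
proof -
  obtain p c where level: "payoff_level K L s p c"
    using payoff_level_exists[OF assms(2-4)] by blast
  have "p \<in> strategies K" using level by (simp add: payoff_level_def)
  moreover have "resp_payoff K L s q (\<lambda>i. (1 - e) * p i + e * q i)
      < resp_payoff K L s p (\<lambda>i. (1 - e) * p i + e * q i)"
    if "q \<in> strategies K" "q \<noteq> p" "e \<in> {0<..<1}" for q e
    using payoff_level_beats_mixtures[OF assms(2) _ level that] assms(3) by simp
  ultimately show ?thesis by (rule unique_ESS_if_beats_mixtures)
qed

end
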